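(* Let $U\subset\mathbb{R}^4$ be a contractible, oriented, relatively compact nonempty open set and $V\subset\mathbb{R}^{n_s}$ an oriented open set. Let $\mathcal{G}$ be a Riemannian metric on $V$ and $\mathcal{J}$ a taming map on $V$. Let $(f,\mathfrak{A})\in\mathrm{Diff}(V)\times\mathrm{Sp}(2n_v,\mathbb{R})$ and set $\mathcal{J}^f_{\mathfrak{A}}=\mathfrak{A}(\mathcal{J}\circ f^{-1})\mathfrak{A}^{-1}$. Then for every $(g,\phi,\mathcal{V})\in\mathrm{Conf}_U(\mathcal{G},\mathcal{J})$, putting $(\hat g,\hat\phi,\hat{\mathcal{V}})=(g,f\circ\phi,\mathfrak{A}\mathcal{V})$, we have $$\mathcal{T}(f_\ast\mathcal{G},\mathcal{J}^f_{\mathfrak{A}})(\hat g,\hat\phi,\hat{\mathcal{V}})=\mathcal{T}(\mathcal{G},\mathcal{J})(g,\phi,\mathcal{V}),$$ where $f_\ast\mathcal{G}$ is the push-forward of $\mathcal{G}$ by $f$.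
   Context: $\mathrm{Diff}(V)$ is the group of orientation-preserving diffeomorphisms of $V$. The standard symplectic form $\omega$ on $\mathbb{R}^{2n_v}$ has matrix $\begin{pmatrix}0&-\mathrm{Id}\\ \mathrm{Id}&0\end{pmatrix}$ in the canonical basis, and $\mathrm{Sp}(2n_v,\mathbb{R})$ is its stabilizer in $\mathrm{Aut}(\mathbb{R}^{2n_v})$. A taming map on $V$ is a smooth $\mathcal{J}\colon V\to\mathrm{Aut}(\mathbb{R}^{2n_v})$ with values complex structures $J$ satisfying $\omega(J\cdot,J\cdot)=\omega$ and $\omega(\xi,J\xi)>0$ for $\xi\ne0$. Every taming map is uniquely of the form $\begin{pmatrix}-\mathcal{I}^{-1}\mathcal{R} & \mathcal{I}^{-1}\\ -\mathcal{I}-\mathcal{R}\mathcal{I}^{-1}\mathcal{R} & \mathcal{R}\mathcal{I}^{-1}\end{pmatrix}$ for smooth $\mathcal{R},\mathcal{I}\colon V\to\mathrm{Sym}(n_v,\mathbb{R})$, $\mathcal{I}$ pointwise positive definite; write $(\mathcal{R},\mathcal{I})=\gamma^{-1}(\mathcal{J})$. The configuration space $\mathrm{Conf}_U(\mathcal{G},\mathcal{J})$ is the set of triples $(g,\phi,\mathcal{V})$ with $g$ a Lorentzian metric on $U$, $\phi\in C^\infty(U,V)$ and $\mathcal{V}\in\Omega^2(U,\mathbb{R}^{2n_v})$ satisfying $\ast_g\mathcal{V}=-(\mathcal{J}\circ\phi)\mathcal{V}$ ($\ast_g$ the Hodge star of $g$ and the orientation of $U$). Writing $\mathcal{V}=(F,G)^t$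 with $F=(F^\Lambda)\in\Omega^2(U,\mathbb{R}^{n_v})$, the energy momentum tensor is the symmetric tensor with components (indices raised with $g$, $x^a$ coordinates on $U$) $$\mathcal{T}(\mathcal{G},\mathcal{J})(g,\phi,\mathcal{V})_{ab}=\mathcal{G}_{ij}(\phi)\partial_a\phi^i\partial_b\phi^j-\tfrac12g_{ab}\mathcal{G}_{ij}(\phi)\partial_c\phi^i\partial^c\phi^j+2\mathcal{I}_{\Lambda\Sigma}(\phi)F^\Lambda_{ac}F^{\Sigma\,c}_{b}-\tfrac12g_{ab}\mathcal{I}_{\Lambda\Sigma}(\phi)F^\Lambda_{cd}F^{\Sigma\,cd},$$ where $\mathcal{G}(\phi)=\mathcal{G}\circ\phi$, $\mathcal{I}(\phi)=\mathcal{I}\circ\phi$ with $(\mathcal{R},\mathcal{I})=\gamma^{-1}(\mathcal{J})$. *)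

theory Defs
  imports "HOL-Analysis.Analysis"
begin

fun Ck_on :: "nat \<Rightarrow> 'a::euclidean_space set \<Rightarrow> ('a \<Rightarrow> 'b::euclidean_space) \<Rightarrow> bool" where
  "Ck_on 0 S f = continuous_on S f"
| "Ck_on (Suc k) S f = (f differentiable_on S \<and>
      (\<forall>i\<in>Basis. Ck_on k S (\<lambda>x. frechet_derivative f (at x) i)))"

definition smooth_on :: "'a::euclidean_space set \<Rightarrow> ('a \<Rightarrow> 'b::euclidean_space) \<Rightarrow> bool" where
  "smooth_on S f \<longleftrightarrow> (\<forall>k. Ck_on k S f)"

(* an orientation of an open set of R^n, relative to the standard one:
   a locally constant sign function *)
definition orientation_on :: "'a::euclidean_space set \<Rightarrow> ('a \<Rightarrow> real) \<Rightarrow> bool" where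
  "orientation_on S ori \<longleftrightarrow> (\<forall>x\<in>S. ori x = 1 \<or> ori x = -1) \<and> continuous_on S ori"

definition orient_diffeo :: "(real^'s::finite) set \<Rightarrow> (real^'s \<Rightarrow> real) \<Rightarrow> (real^'s \<Rightarrow> real^'s) \<Rightarrow> bool" where
  "orient_diffeo V oV f \<longleftrightarrow> bij_betw f V V \<and> smooth_on V f \<and> smooth_on V (inv_into V f) \<and>
     (\<forall>x\<in>V. oV (f x) * oV x * det (matrix (frechet_derivative f (at x))) > 0)"

definition pos_def_mat :: "real^'n^'n \<Rightarrow> bool" where
  "pos_def_mat M \<longleftrightarrow> (\<forall>x. x \<noteq> 0 \<longrightarrow> x \<bullet> (M *v x) > 0)"

definition riemannian_on :: "(real^'s::finite) set \<Rightarrow> (real^'s \<Rightarrow> real^'s^'s) \<Rightarrow> bool" where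
  "riemannian_on V G \<longleftrightarrow> smooth_on V G \<and> (\<forall>y\<in>V. transpose (G y) = G y \<and> pos_def_mat (G y))"

(* standard symplectic matrix on R^{2n}, indices Inl = first n, Inr = last n *)
definition symp_mat :: "real^('v::finite + 'v)^('v + 'v)" where
  "symp_mat = (\<chi> i j. case (i, j) of
      (Inl a, Inr b) \<Rightarrow> (if a = b then -1 else 0)
    | (Inr a, Inl b) \<Rightarrow> (if a = b then 1 else 0)
    | _ \<Rightarrow> 0)"

definition symp_form :: "real^('v::finite + 'v) \<Rightarrow> real^('v + 'v) \<Rightarrow> real" where
  "symp_form \<xi> \<eta> = \<xi> \<bullet> (symp_mat *v \<eta>)"

definition Sp :: "(real^('v::finite + 'v)^('v + 'v)) set" where
  "Sp = {A. invertible A \<and> (\<forall>\<xi> \<eta>. symp_form (A *v \<xi>) (A *v \<eta>) = symp_form \<xi> \<eta>)}"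

definition tame_cs :: "real^('v::finite + 'v)^('v + 'v) \<Rightarrow> bool" where
  "tame_cs Jm \<longleftrightarrow> invertible Jm \<and> Jm ** Jm = - mat 1 \<and>
     (\<forall>\<xi> \<eta>. symp_form (Jm *v \<xi>) (Jm *v \<eta>) = symp_form \<xi> \<eta>) \<and>
     (\<forall>\<xi>. \<xi> \<noteq> 0 \<longrightarrow> symp_form \<xi> (Jm *v \<xi>) > 0)"

definition taming_map :: "(real^'s::finite) set \<Rightarrow> (real^'s \<Rightarrow> real^('v::finite + 'v)^('v + 'v)) \<Rightarrow> bool" where
  "taming_map V J \<longleftrightarrow> smooth_on V J \<and> (\<forall>y\<in>V. tame_cs (J y))"

definition gamma_mat :: "real^'v::finite^'v \<Rightarrow> real^'v^'v \<Rightarrow> real^('v + 'v)^('v + 'v)" where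
  "gamma_mat R I = (let Ii = matrix_inv I in (\<chi> i j. case i of
      Inl a \<Rightarrow> (case j of Inl b \<Rightarrow> (- (Ii ** R)) $ a $ b | Inr b \<Rightarrow> Ii $ a $ b)
    | Inr a \<Rightarrow> (case j of Inl b \<Rightarrow> (- I - R ** Ii ** R) $ a $ b | Inr b \<Rightarrow> (R ** Ii) $ a $ b)))"

definition gamma_inv :: "real^('v::finite + 'v)^('v + 'v) \<Rightarrow> (real^'v^'v) \<times> (real^'v^'v)" where
  "gamma_inv Jm = (THE p. case p of (R, I) \<Rightarrow>
      transpose R = R \<and> transpose I = I \<and> pos_def_mat I \<and> gamma_mat R I = Jm)"

definition minkowski :: "real^4^4" where
  "minkowski = (\<chi> i j. if i = j then (if i = 1 then -1 else 1) else 0)"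

definition lorentzian_on :: "(real^4) set \<Rightarrow> (real^4 \<Rightarrow> real^4^4) \<Rightarrow> bool" where
  "lorentzian_on U g \<longleftrightarrow> smooth_on U g \<and>
     (\<forall>x\<in>U. transpose (g x) = g x \<and>
        (\<exists>P. invertible P \<and> transpose P ** g x ** P = minkowski))"

definition levi :: "4 \<Rightarrow> 4 \<Rightarrow> 4 \<Rightarrow> 4 \<Rightarrow> real" where
  "levi a b c d = det (vector [axis a 1, axis b 1, axis c 1, axis d 1] :: real^4^4)"

(* Hodge star of a 2-form (antisymmetric component matrix F_ab) at a point,
   metric matrix gm, orientation sign s *)
definition hodge :: "real^4^4 \<Rightarrow> real \<Rightarrow> real^4^4 \<Rightarrow> real^4^4" where
  "hodge gm s F = (let gi = matrix_inv gm in
     (\<chi> a b. s * sqrt \<bar>det gm\<bar> / 2 *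
        (\<Sum>c\<in>UNIV. \<Sum>d\<in>UNIV. levi a b c d *
          (\<Sum>e\<in>UNIV. \<Sum>f\<in>UNIV. gi $ c $ e * gi $ d $ f * F $ e $ f))))"

definition Conf :: "(real^4) set \<Rightarrow> (real^4 \<Rightarrow> real) \<Rightarrow> (real^'s::finite) set \<Rightarrow>
    (real^'s \<Rightarrow> real^'s^'s) \<Rightarrow> (real^'s \<Rightarrow> real^('v::finite + 'v)^('v + 'v)) \<Rightarrow>
    ((real^4 \<Rightarrow> real^4^4) \<times> (real^4 \<Rightarrow> real^'s) \<times> (real^4 \<Rightarrow> real^4^4^('v + 'v))) set" where
  "Conf U oU V G J = {(g, \<phi>, \<V>).
      lorentzian_on U g \<and> smooth_on U \<phi> \<and> \<phi> ` U \<subseteq> V \<and> smooth_on U \<V> \<and>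
      (\<forall>x\<in>U. \<forall>k. transpose (\<V> x $ k) = - (\<V> x $ k)) \<and>
      (\<forall>x\<in>U. \<forall>k. hodge (g x) (oU x) (\<V> x $ k) =
          - (\<Sum>l\<in>UNIV. J (\<phi> x) $ k $ l *\<^sub>R \<V> x $ l))}"

definition energy_momentum :: "(real^'s::finite \<Rightarrow> real^'s^'s) \<Rightarrow> (real^'s \<Rightarrow> real^('v::finite + 'v)^('v + 'v)) \<Rightarrow>
    (real^4 \<Rightarrow> real^4^4) \<Rightarrow> (real^4 \<Rightarrow> real^'s) \<Rightarrow> (real^4 \<Rightarrow> real^4^4^('v + 'v)) \<Rightarrow> real^4 \<Rightarrow> real^4^4" where
  "energy_momentum G J g \<phi> \<V> x = (let
      gx = g x; gi = matrix_inv gx;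
      d\<phi> = (\<lambda>a. frechet_derivative \<phi> (at x) (axis a 1));
      Gm = G (\<phi> x); Im = snd (gamma_inv (J (\<phi> x)));
      F = (\<lambda>L. \<V> x $ Inl L);
      kin = (\<Sum>i\<in>UNIV. \<Sum>j\<in>UNIV. Gm $ i $ j *
               (\<Sum>c\<in>UNIV. \<Sum>d\<in>UNIV. gi $ c $ d * d\<phi> c $ i * d\<phi> d $ j));
      FF = (\<Sum>L\<in>UNIV. \<Sum>S\<in>UNIV. Im $ L $ S *
               (\<Sum>c\<in>UNIV. \<Sum>d\<in>UNIV. \<Sum>e\<in>UNIV. \<Sum>f\<in>UNIV.
                  gi $ c $ e * gi $ d $ f * F L $ c $ d * F S $ e $ f))
    in (\<chi> a b. (\<Sum>i\<in>UNIV. \<Sum>j\<in>UNIV. Gm $ i $ j * d\<phi> a $ i * d\<phi> b $ j)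
          - 1/2 * gx $ a $ b * kin
          + 2 * (\<Sum>L\<in>UNIV. \<Sum>S\<in>UNIV. Im $ L $ S *
                   (\<Sum>c\<in>UNIV. \<Sum>d\<in>UNIV. F L $ a $ c * gi $ c $ d * F S $ b $ d))
          - 1/2 * gx $ a $ b * FF))"

definition push_metric :: "(real^'s::finite) set \<Rightarrow> (real^'s \<Rightarrow> real^'s) \<Rightarrow> (real^'s \<Rightarrow> real^'s^'s) \<Rightarrow> real^'s \<Rightarrow> real^'s^'s" where
  "push_metric V f G y = (let h = inv_into V f; D = frechet_derivative h (at y) in
     (\<chi> i j. \<Sum>k\<in>UNIV. \<Sum>l\<in>UNIV. G (h y) $ k $ l * D (axis i 1) $ k * D (axis j 1) $ l))"

definition J_transf :: "(real^'s::finite) set \<Rightarrow> (real^'s \<Rightarrow> real^'s) \<Rightarrow> real^('v::finite + 'v)^('v + 'v) \<Rightarrow>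
    (real^'s \<Rightarrow> real^('v + 'v)^('v + 'v)) \<Rightarrow> real^'s \<Rightarrow> real^('v + 'v)^('v + 'v)" where
  "J_transf V f A J y = A ** J (inv_into V f y) ** matrix_inv A"

end

theory Submission
  imports Defs
begin

(* The scalar part of T depends on phi only through the pulled-back metric phi^* G, and by the
   chain rule (f_* G) pulled back along f o phi is phi^* G.
   For the gauge part write J = gamma(R, I), V = (F, G), and star for the Hodge star. The twisted
   self-duality star V = - J V says G = R F - I star F, i.e. V = P (F, star F) with
   P = [[1, 0], [R, -I]], and P^t (Omega J) P = diag(I, I). In Lorentzian signature
   (star F)_ac g^cd (star F')_bd = F'_ac g^cd F_bd - 1/2 g_ab F.F', so the gauge part
   2 I F_ac F_b^c - 1/2 g I F.F of T equals the contraction (Omega J)_kl V^k_ac g^cd V^l_bd.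
   For A in Sp(2n) we have A^t Omega (A J A^-1) A = Omega J, so this contraction does not change
   under (J, V) |-> (A J A^-1, A V). *)

lemma sum_UNIV_sum_type:
  fixes f :: "'a::finite + 'b::finite \<Rightarrow> 'c::comm_monoid_add"
  shows "(\<Sum>k\<in>UNIV. f k) = (\<Sum>a\<in>UNIV. f (Inl a)) + (\<Sum>b\<in>UNIV. f (Inr b))"
  using sum.Plus[of "UNIV::'a set" "UNIV::'b set" f] by (simp add: o_def)

lemma sum_swap_pairs:
  "(\<Sum>a\<in>A. \<Sum>b\<in>B. \<Sum>c\<in>C. \<Sum>d\<in>D. f a b c d) = (\<Sum>c\<in>C. \<Sum>d\<in>D. \<Sum>a\<in>A. \<Sum>b\<in>B. f a b c d)"
proof -
  have "(\<Sum>a\<in>A. \<Sum>b\<in>B. \<Sum>c\<in>C. \<Sum>d\<in>D. f a b c d) = (\<Sum>a\<in>A. \<Sum>c\<in>C. \<Sum>b\<in>B. \<Sum>d\<in>D. f a b c d)"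
    by (rule sum.cong[OF refl], rule sum.swap)
  also have "\<dots> = (\<Sum>c\<in>C. \<Sum>a\<in>A. \<Sum>b\<in>B. \<Sum>d\<in>D. f a b c d)"
    by (rule sum.swap)
  also have "\<dots> = (\<Sum>c\<in>C. \<Sum>a\<in>A. \<Sum>d\<in>D. \<Sum>b\<in>B. f a b c d)"
    by (rule sum.cong[OF refl], rule sum.cong[OF refl], rule sum.swap)
  also have "\<dots> = (\<Sum>c\<in>C. \<Sum>d\<in>D. \<Sum>a\<in>A. \<Sum>b\<in>B. f a b c d)"
    by (rule sum.cong[OF refl], rule sum.swap)
  finally show ?thesis .
qed

lemma matrix_sandwich_nth:
  fixes A :: "'a::comm_semiring_1^'n::finite^'m" and Z :: "'a^'p::finite^'n" and B :: "'a^'p^'q"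
  shows "(A ** Z ** transpose B) $ c $ d = (\<Sum>e\<in>UNIV. \<Sum>f\<in>UNIV. A$c$e * B$d$f * Z$e$f)"
proof -
  have "(A ** Z ** transpose B) $ c $ d = (\<Sum>f\<in>UNIV. \<Sum>e\<in>UNIV. A$c$e * B$d$f * Z$e$f)"
    by (simp add: matrix_matrix_mult_def transpose_def sum_distrib_left sum_distrib_right mult_ac)
  also have "\<dots> = (\<Sum>e\<in>UNIV. \<Sum>f\<in>UNIV. A$c$e * B$d$f * Z$e$f)" by (rule sum.swap)
  finally show ?thesis .
qed

lemma inner_matrix_eq_sum: "X \<bullet> Y = (\<Sum>p\<in>UNIV. \<Sum>q\<in>UNIV. X$p$q * Y$p$q)"
  by (simp add: inner_vec_def)

lemma inner_sandwich_eq_sum: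
  fixes M X Y :: "real^'n^'n"
  shows "(transpose M ** X ** M) \<bullet> Y = (\<Sum>c\<in>UNIV. \<Sum>d\<in>UNIV. \<Sum>e\<in>UNIV. \<Sum>f\<in>UNIV. M$c$e * M$d$f * X$c$d * Y$e$f)"
proof -
  have "(transpose M ** X ** M) $ e $ f = (\<Sum>c\<in>UNIV. \<Sum>d\<in>UNIV. M$c$e * M$d$f * X$c$d)" for e f
    using matrix_sandwich_nth[of "transpose M" X "transpose M" e f] by (simp add: transpose_def)
  then have "(transpose M ** X ** M) \<bullet> Y =
      (\<Sum>e\<in>UNIV. \<Sum>f\<in>UNIV. \<Sum>c\<in>UNIV. \<Sum>d\<in>UNIV. M$c$e * M$d$f * X$c$d * Y$e$f)"
    by (simp add: inner_matrix_eq_sum sum_distrib_right)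
  also have "\<dots> = (\<Sum>c\<in>UNIV. \<Sum>d\<in>UNIV. \<Sum>e\<in>UNIV. \<Sum>f\<in>UNIV. M$c$e * M$d$f * X$c$d * Y$e$f)"
    by (rule sum_swap_pairs)
  finally show ?thesis .
qed

lemma inner_matrix_vector_eq_sum: "u \<bullet> (M *v w) = (\<Sum>i\<in>UNIV. \<Sum>j\<in>UNIV. M$i$j * u$i * w$j)"
  by (simp add: inner_vec_def matrix_vector_mult_def sum_distrib_left mult_ac)

lemma inner_matrix_vector_transpose: "(M *v x) \<bullet> y = x \<bullet> (transpose M *v (y :: real^'m))"
  by (metis dot_lmul_matrix inner_commute transpose_matrix_vector)

lemma inner_congruence:
  fixes P :: "real^'n^'m" and G :: "real^'m^'m"
  shows "u \<bullet> ((transpose P ** G ** P) *v w) = (P *v u) \<bullet> (G *v (P *v w))"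
proof -
  have "u \<bullet> ((transpose P ** G ** P) *v w) = u \<bullet> (transpose P *v (G *v (P *v w)))"
    by (simp add: matrix_vector_mul_assoc matrix_mul_assoc)
  also have "\<dots> = (P *v u) \<bullet> (G *v (P *v w))" by (rule inner_matrix_vector_transpose[symmetric])
  finally show ?thesis .
qed

lemma antisymmetric_matrix_nth:
  assumes "transpose X = - X"
  shows "X$q$p = - X$p$q"
  using arg_cong[OF assms, of "\<lambda>M. M$p$q"] by (simp add: transpose_def)

lemma matrix_inv_right:
  fixes A :: "'a::semiring_1^'n^'m"
  assumes "invertible A"
  shows "A ** matrix_inv A = mat 1"
  using someI_ex[OF assms[unfolded invertible_def]] unfolding matrix_inv_def by blast

lemma matrix_inv_left:
  fixes A :: "'a::semiring_1^'n^'m"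
  assumes "invertible A"
  shows "matrix_inv A ** A = mat 1"
  using someI_ex[OF assms[unfolded invertible_def]] unfolding matrix_inv_def by blast

lemma matrix_inv_unique:
  fixes A B :: "'a::comm_semiring_1^'n^'n"
  assumes "A ** B = mat 1" and "B ** A = mat 1"
  shows "matrix_inv A = B"
proof -
  have "invertible A" using assms unfolding invertible_def by blast
  then have "matrix_inv A = B ** (A ** matrix_inv A)"
    by (simp add: matrix_mul_assoc assms(2))
  also have "\<dots> = B" using \<open>invertible A\<close> by (simp add: matrix_inv_right)
  finally show ?thesis .
qed

lemma invertible_matrix_inv:
  fixes A :: "'a::semiring_1^'n^'m"
  assumes "invertible A"
  shows "invertible (matrix_inv A)"
  using matrix_inv_left[OF assms] matrix_inv_right[OF assms] unfolding invertible_def by blast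

lemma matrix_inv_matrix_inv:
  fixes A :: "'a::comm_semiring_1^'n^'n"
  assumes "invertible A"
  shows "matrix_inv (matrix_inv A) = A"
  by (rule matrix_inv_unique[OF matrix_inv_left[OF assms] matrix_inv_right[OF assms]])

lemma transpose_matrix_inv_symmetric:
  fixes A :: "'a::comm_semiring_1^'n^'n"
  assumes "invertible A" and "transpose A = A"
  shows "transpose (matrix_inv A) = matrix_inv A"
proof -
  have "A ** transpose (matrix_inv A) = mat 1" "transpose (matrix_inv A) ** A = mat 1"
    using arg_cong[OF matrix_inv_left[OF assms(1)], of transpose]
      arg_cong[OF matrix_inv_right[OF assms(1)], of transpose]
    by (simp_all add: matrix_transpose_mul assms(2))
  then show ?thesis by (metis matrix_inv_unique)
qed

lemma matrix_neg_mult [simp]: "(- A) ** (B :: 'a::ring_1^'n^'m) = - (A ** B)"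
  by (simp add: vec_eq_iff matrix_matrix_mult_def sum_negf)

lemma matrix_mult_neg [simp]: "(A :: 'a::ring_1^'n^'m) ** (- B) = - (A ** B)"
  by (simp add: vec_eq_iff matrix_matrix_mult_def sum_negf)

lemma matrix_add_rdistrib: "(A + B) ** (C :: 'a::ring_1^'n^'m) = A ** C + B ** C"
  by (simp add: vec_eq_iff matrix_matrix_mult_def sum.distrib ring_distribs)

lemma matrix_diff_rdistrib: "(A - B) ** (C :: 'a::ring_1^'n^'m) = A ** C - B ** C"
  by (simp add: vec_eq_iff matrix_matrix_mult_def sum_subtractf ring_distribs)

lemma transpose_neg [simp]: "transpose (- A) = - transpose (A :: 'a::ring_1^'n^'m)"
  by (simp add: vec_eq_iff transpose_def)

lemma transpose_zero [simp]: "transpose (0 :: 'a::ring_1^'n^'m) = 0"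
  by (simp add: vec_eq_iff transpose_def)

lemma matrix_eq_if_bilinear_eq:
  fixes A B :: "real^'n^'m"
  assumes "\<And>x y. x \<bullet> (A *v y) = x \<bullet> (B *v y)"
  shows "A = B"
proof -
  have "(A *v axis j 1) $ i = (B *v axis j 1) $ i" for i j
    using assms[of "axis i 1" "axis j 1"] by (simp add: inner_axis')
  then show ?thesis
    by (simp add: vec_eq_iff matrix_vector_mult_def axis_def if_distrib[of "\<lambda>x. _ * x"] cong: if_cong)
qed

lemma pos_def_mat_invertible:
  fixes M :: "real^'n^'n"
  assumes "pos_def_mat M"
  shows "invertible M"
proof -
  have "inj ((*v) M)"
  proof (rule injI)
    fix x y assume "M *v x = M *v y"
    then have "M *v (x - y) = 0" by (simp add: matrix_vector_mult_diff_distrib)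
    then show "x = y"
      using assms unfolding pos_def_mat_def by (metis inner_zero_right less_irrefl right_minus_eq)
  qed
  then show ?thesis using matrix_left_invertible_injective invertible_left_inverse by blast
qed

lemma pos_def_mat_matrix_inv:
  fixes M :: "real^'n^'n"
  assumes M: "pos_def_mat M" and sym: "transpose M = M"
  shows "pos_def_mat (matrix_inv M)"
  unfolding pos_def_mat_def
proof (intro allI impI)
  fix x :: "real^'n" assume "x \<noteq> 0"
  define y where "y = matrix_inv M *v x"
  have x: "x = M *v y"
    using pos_def_mat_invertible[OF M] by (simp add: y_def matrix_vector_mul_assoc matrix_inv_right)
  with \<open>x \<noteq> 0\<close> have "y \<noteq> 0" by auto
  then have "y \<bullet> (M *v y) > 0" using M unfolding pos_def_mat_def by blast
  also have "y \<bullet> (M *v y) = x \<bullet> y" using x by (simp add: inner_commute)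
  finally show "x \<bullet> (matrix_inv M *v x) > 0" by (simp add: y_def)
qed

definition block_mat :: "real^'v^'v \<Rightarrow> real^'v^'v \<Rightarrow> real^'v^'v \<Rightarrow> real^'v^'v \<Rightarrow> real^('v::finite + 'v)^('v + 'v)" where
  "block_mat A B C D = (\<chi> i j. case i of
      Inl a \<Rightarrow> (case j of Inl b \<Rightarrow> A$a$b | Inr b \<Rightarrow> B$a$b)
    | Inr a \<Rightarrow> (case j of Inl b \<Rightarrow> C$a$b | Inr b \<Rightarrow> D$a$b))"

lemma block_mat_nth [simp]:
  "block_mat A B C D $ Inl a $ Inl b = A$a$b" "block_mat A B C D $ Inl a $ Inr b = B$a$b"
  "block_mat A B C D $ Inr a $ Inl b = C$a$b" "block_mat A B C D $ Inr a $ Inr b = D$a$b"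
  by (simp_all add: block_mat_def)

lemma block_mat_ext:
  fixes M N :: "real^('v::finite + 'v)^('v + 'v)"
  assumes "\<And>a b. M$Inl a$Inl b = N$Inl a$Inl b" "\<And>a b. M$Inl a$Inr b = N$Inl a$Inr b"
    "\<And>a b. M$Inr a$Inl b = N$Inr a$Inl b" "\<And>a b. M$Inr a$Inr b = N$Inr a$Inr b"
  shows "M = N"
proof -
  have "M$i$j = N$i$j" for i j using assms by (cases i; cases j) auto
  then show ?thesis by (simp add: vec_eq_iff)
qed

lemma block_mat_cases:
  fixes M :: "real^('v::finite + 'v)^('v + 'v)"
  obtains A B C D where "M = block_mat A B C D"
proof
  show "M = block_mat (\<chi> a b. M$Inl a$Inl b) (\<chi> a b. M$Inl a$Inr b) (\<chi> a b. M$Inr a$Inl b) (\<chi> a b. M$Inr a$Inr b)"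
    by (rule block_mat_ext) simp_all
qed

lemma block_mat_eq_iff:
  "block_mat A B C D = block_mat A' B' C' D' \<longleftrightarrow> A = A' \<and> B = B' \<and> C = C' \<and> D = D'"
  by (auto simp: vec_eq_iff block_mat_def split: sum.split)

lemma block_mat_mult:
  "block_mat A B C D ** block_mat A' B' C' D' =
     block_mat (A ** A' + B ** C') (A ** B' + B ** D') (C ** A' + D ** C') (C ** B' + D ** D')"
  by (rule block_mat_ext) (simp_all add: matrix_matrix_mult_def sum_UNIV_sum_type)

lemma transpose_block_mat:
  "transpose (block_mat A B C D) = block_mat (transpose A) (transpose C) (transpose B) (transpose D)"
  by (rule block_mat_ext) (simp_all add: transpose_def)

lemma uminus_block_mat: "- block_mat A B C D = block_mat (- A) (- B) (- C) (- D)"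
  by (rule block_mat_ext) simp_all

lemma mat_1_block_mat: "mat 1 = block_mat (mat 1) 0 0 (mat 1)"
  by (rule block_mat_ext) (simp_all add: mat_def)

lemma symp_mat_block_mat: "symp_mat = block_mat 0 (- mat 1) (mat 1) 0"
  by (rule block_mat_ext) (simp_all add: symp_mat_def mat_def)

lemma gamma_mat_block_mat:
  "gamma_mat R I =
     block_mat (- (matrix_inv I ** R)) (matrix_inv I) (- I - R ** matrix_inv I ** R) (R ** matrix_inv I)"
  by (rule block_mat_ext) (simp_all add: gamma_mat_def Let_def)

section \<open>Taming complex structures\<close>

lemma symp_form_matrix_mult:
  "symp_form (M *v \<xi>) (M *v \<eta>) = \<xi> \<bullet> ((transpose M ** symp_mat ** M) *v \<eta>)"
  unfolding symp_form_def inner_matrix_vector_transpose by (simp add: matrix_vector_mul_assoc matrix_mul_assoc)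

lemma transpose_symp_mat: "transpose symp_mat = - symp_mat"
  by (simp add: symp_mat_block_mat transpose_block_mat uminus_block_mat)

lemma symp_form_preserved_iff:
  "(\<forall>\<xi> \<eta>. symp_form (M *v \<xi>) (M *v \<eta>) = symp_form \<xi> \<eta>) \<longleftrightarrow> transpose M ** symp_mat ** M = symp_mat"
  unfolding symp_form_matrix_mult by (auto simp: symp_form_def intro: matrix_eq_if_bilinear_eq)

lemma tame_cs_symp_mat_mult_symmetric:
  assumes "tame_cs J"
  shows "transpose (symp_mat ** J) = symp_mat ** J"
proof -
  have J2: "J ** J = - mat 1" and symp: "transpose J ** symp_mat ** J = symp_mat"
    using assms symp_form_preserved_iff unfolding tame_cs_def by blast+
  have "transpose J ** symp_mat = (transpose J ** symp_mat ** J) ** (- J)"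
    by (simp add: J2 flip: matrix_mul_assoc)
  then show ?thesis
    by (simp add: symp matrix_transpose_mul transpose_symp_mat)
qed

lemma tame_cs_conj_Sp:
  assumes A: "A \<in> Sp" and J: "tame_cs J"
  shows "tame_cs (A ** J ** matrix_inv A)"
proof -
  define Ai where "Ai = matrix_inv A"
  have "invertible A" and A_symp: "\<And>\<xi> \<eta>. symp_form (A *v \<xi>) (A *v \<eta>) = symp_form \<xi> \<eta>"
    using A unfolding Sp_def by blast+
  then have AAi: "A ** Ai = mat 1" and AiA: "Ai ** A = mat 1"
    unfolding Ai_def by (simp_all add: matrix_inv_right matrix_inv_left)
  have J_symp: "\<And>\<xi> \<eta>. symp_form (J *v \<xi>) (J *v \<eta>) = symp_form \<xi> \<eta>"
    using J unfolding tame_cs_def by blast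
  have conj_apply: "(A ** J ** Ai) *v \<xi> = A *v (J *v (Ai *v \<xi>))" for \<xi>
    by (simp add: matrix_vector_mul_assoc matrix_mul_assoc)
  have "invertible (A ** J ** Ai)"
    using J \<open>invertible A\<close> unfolding Ai_def tame_cs_def
    by (intro invertible_mult invertible_matrix_inv) auto
  moreover have "(A ** J ** Ai) ** (A ** J ** Ai) = - mat 1"
  proof -
    have "(A ** J ** Ai) ** (A ** J ** Ai) = A ** (J ** J) ** Ai"
      by (simp add: matrix_mul_assoc) (simp add: AiA flip: matrix_mul_assoc)
    then show ?thesis using J AAi unfolding tame_cs_def by simp
  qed
  moreover have "symp_form ((A ** J ** Ai) *v \<xi>) ((A ** J ** Ai) *v \<eta>) = symp_form \<xi> \<eta>" for \<xi> \<eta>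
  proof -
    have "symp_form \<xi> \<eta> = symp_form (A *v (Ai *v \<xi>)) (A *v (Ai *v \<eta>))"
      by (simp add: matrix_vector_mul_assoc AAi)
    then show ?thesis by (simp add: conj_apply A_symp J_symp)
  qed
  moreover have "symp_form \<xi> ((A ** J ** Ai) *v \<xi>) > 0" if "\<xi> \<noteq> 0" for \<xi>
  proof -
    have \<xi>: "\<xi> = A *v (Ai *v \<xi>)" by (simp add: matrix_vector_mul_assoc AAi)
    with that have "Ai *v \<xi> \<noteq> 0" by auto
    then have "symp_form (Ai *v \<xi>) (J *v (Ai *v \<xi>)) > 0" using J unfolding tame_cs_def by blast
    then show ?thesis by (subst \<xi>) (simp add: conj_apply A_symp)
  qed
  ultimately show ?thesis unfolding tame_cs_def Ai_def by blast
qed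

lemma tame_cs_block_mat_pos_def:
  fixes a b c d :: "real^'v::finite^'v"
  assumes "tame_cs (block_mat a b c d)"
  shows "pos_def_mat b"
  unfolding pos_def_mat_def
proof (intro allI impI)
  fix y :: "real^'v" assume "y \<noteq> 0"
  define \<xi> :: "real^('v + 'v)" where "\<xi> = (\<chi> k. case k of Inl _ \<Rightarrow> 0 | Inr i \<Rightarrow> y$i)"
  have "\<xi> $ Inr i = y $ i" for i by (simp add: \<xi>_def)
  with \<open>y \<noteq> 0\<close> have "\<xi> \<noteq> 0" by (metis vec_eq_iff zero_index)
  then have "symp_form \<xi> (block_mat a b c d *v \<xi>) > 0" using assms unfolding tame_cs_def by blast
  moreover have "symp_form \<xi> (block_mat a b c d *v \<xi>) = y \<bullet> (b *v y)"
    unfolding symp_form_def symp_mat_block_mat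
    by (simp add: inner_vec_def matrix_vector_mult_def sum_UNIV_sum_type \<xi>_def mat_def mult_if_delta)
  ultimately show "y \<bullet> (b *v y) > 0" by simp
qed

lemma tame_cs_block_mat:
  fixes a b c d :: "real^'v::finite^'v"
  assumes "tame_cs (block_mat a b c d)"
  shows "a ** b + b ** d = 0" "c ** b + d ** d = - mat 1" "transpose a = - d" "transpose b = b"
proof -
  have "block_mat (a ** a + b ** c) (a ** b + b ** d) (c ** a + d ** c) (c ** b + d ** d) =
      block_mat (- mat 1) 0 0 (- mat 1)"
    using assms unfolding tame_cs_def block_mat_mult mat_1_block_mat uminus_block_mat by simp
  then show "a ** b + b ** d = 0" "c ** b + d ** d = - mat 1"
    unfolding block_mat_eq_iff by simp_all
  have "block_mat (- transpose c) (transpose a) (- transpose d) (transpose b) = block_mat (- c) (- d) a b"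
    using tame_cs_symp_mat_mult_symmetric[OF assms]
    unfolding symp_mat_block_mat block_mat_mult transpose_block_mat by simp
  then show "transpose a = - d" "transpose b = b"
    unfolding block_mat_eq_iff by simp_all
qed

lemma gamma_mat_of_blocks:
  fixes a b c d :: "real^'v::finite^'v"
  assumes b: "pos_def_mat b" "transpose b = b" and ab: "a ** b + b ** d = 0"
    and cb: "c ** b + d ** d = - mat 1" and a: "transpose a = - d"
  shows "transpose (- (matrix_inv b ** a)) = - (matrix_inv b ** a)"
    and "gamma_mat (- (matrix_inv b ** a)) (matrix_inv b) = block_mat a b c d"
proof -
  define I where "I = matrix_inv b"
  define R where "R = - (I ** a)"
  have Ib: "I ** b = mat 1" and bI: "b ** I = mat 1"
    using pos_def_mat_invertible[OF b(1)] unfolding I_def by (simp_all add: matrix_inv_left matrix_inv_right)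
  have R_eq: "R = d ** I"
  proof -
    have "I ** (a ** b + b ** d) ** I = I ** a + d ** I"
      by (simp add: matrix_add_ldistrib matrix_add_rdistrib matrix_mul_assoc Ib)
        (simp add: bI flip: matrix_mul_assoc)
    with ab have "I ** a + d ** I = 0" by simp
    then show ?thesis unfolding R_def by (rule minus_unique)
  qed
  have "transpose I = I"
    unfolding I_def by (rule transpose_matrix_inv_symmetric[OF pos_def_mat_invertible[OF b(1)] b(2)])
  moreover have "transpose d = - a" using arg_cong[OF a, of transpose] by simp
  ultimately have "transpose R = R"
    by (simp add: R_eq matrix_transpose_mul) (simp add: R_def flip: R_eq)
  then show "transpose (- (matrix_inv b ** a)) = - (matrix_inv b ** a)"
    unfolding R_def I_def .
  have "- (b ** R) = a" by (simp add: R_def matrix_mul_assoc bI)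
  moreover have Rb: "R ** b = d" by (simp add: R_eq Ib flip: matrix_mul_assoc)
  moreover have "- I - R ** b ** R = c"
  proof -
    have "c = (c ** b + d ** d - d ** d) ** I" by (simp add: bI flip: matrix_mul_assoc)
    also have "\<dots> = - I - d ** R" by (simp add: cb matrix_diff_rdistrib R_eq matrix_mul_assoc)
    finally show ?thesis by (simp add: Rb)
  qed
  moreover have "matrix_inv I = b" unfolding I_def by (rule matrix_inv_matrix_inv[OF pos_def_mat_invertible[OF b(1)]])
  ultimately show "gamma_mat (- (matrix_inv b ** a)) (matrix_inv b) = block_mat a b c d"
    unfolding gamma_mat_block_mat R_def[symmetric] I_def[symmetric] by simp
qed

lemma tame_cs_gamma_mat_exists:
  fixes J :: "real^('v::finite + 'v)^('v + 'v)"
  assumes "tame_cs J"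
  obtains R I where "transpose R = R" "transpose I = I" "pos_def_mat I" "gamma_mat R I = J"
proof -
  obtain a b c d where J: "J = block_mat a b c d" by (rule block_mat_cases)
  note blocks = tame_cs_block_mat[OF assms[unfolded J]]
  have b: "pos_def_mat b" using assms unfolding J by (rule tame_cs_block_mat_pos_def)
  note gamma = gamma_mat_of_blocks[OF b blocks(4,1,2,3)]
  show ?thesis
  proof (rule that)
    show "transpose (- (matrix_inv b ** a)) = - (matrix_inv b ** a)" by (rule gamma(1))
    show "transpose (matrix_inv b) = matrix_inv b"
      by (rule transpose_matrix_inv_symmetric[OF pos_def_mat_invertible[OF b] blocks(4)])
    show "pos_def_mat (matrix_inv b)" by (rule pos_def_mat_matrix_inv[OF b blocks(4)])
    show "gamma_mat (- (matrix_inv b ** a)) (matrix_inv b) = J" unfolding J by (rule gamma(2))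
  qed
qed

lemma gamma_mat_inj:
  assumes "pos_def_mat I1" "pos_def_mat I2" "gamma_mat R1 I1 = gamma_mat R2 I2"
  shows "R1 = R2 \<and> I1 = I2"
proof -
  have inv1: "invertible I1" and inv2: "invertible I2" using assms(1,2) by (simp_all add: pos_def_mat_invertible)
  have "- (matrix_inv I1 ** R1) = - (matrix_inv I2 ** R2)" and inv_eq: "matrix_inv I1 = matrix_inv I2"
    using assms(3) unfolding gamma_mat_block_mat block_mat_eq_iff by blast+
  then have "matrix_inv I1 ** R1 = matrix_inv I2 ** R2" by simp
  moreover have "I1 = I2" using inv_eq by (metis matrix_inv_matrix_inv inv1 inv2)
  ultimately have "I1 ** (matrix_inv I1 ** R1) = I2 ** (matrix_inv I2 ** R2)" by simp
  then show ?thesis using \<open>I1 = I2\<close> inv1 inv2 by (simp add: matrix_mul_assoc matrix_inv_right)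
qed

lemma gamma_inv:
  assumes "tame_cs J"
  shows "transpose (fst (gamma_inv J)) = fst (gamma_inv J)" "transpose (snd (gamma_inv J)) = snd (gamma_inv J)"
    "pos_def_mat (snd (gamma_inv J))" "gamma_mat (fst (gamma_inv J)) (snd (gamma_inv J)) = J"
proof -
  obtain R I where RI: "transpose R = R" "transpose I = I" "pos_def_mat I" "gamma_mat R I = J"
    using tame_cs_gamma_mat_exists[OF assms] .
  have "gamma_inv J = (R, I)"
    unfolding gamma_inv_def
  proof (rule the_equality)
    show "case (R, I) of (R, I) \<Rightarrow> transpose R = R \<and> transpose I = I \<and> pos_def_mat I \<and> gamma_mat R I = J"
      using RI by simp
  next
    fix p assume "case p of (R', I') \<Rightarrow> transpose R' = R' \<and> transpose I' = I' \<and> pos_def_mat I' \<and> gamma_mat R' I' = J"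
    then show "p = (R, I)" using RI gamma_mat_inj by (cases p) fastforce
  qed
  then show "transpose (fst (gamma_inv J)) = fst (gamma_inv J)" "transpose (snd (gamma_inv J)) = snd (gamma_inv J)"
    "pos_def_mat (snd (gamma_inv J))" "gamma_mat (fst (gamma_inv J)) (snd (gamma_inv J)) = J"
    using RI by simp_all
qed

section \<open>The Hodge star on 2-forms in four dimensions\<close>

lemma vector_4_nth [simp]:
  "(vector [x, y, z, w] :: 'a::zero^4) $ 1 = x" "(vector [x, y, z, w] :: 'a::zero^4) $ 2 = y"
  "(vector [x, y, z, w] :: 'a::zero^4) $ 3 = z" "(vector [x, y, z, w] :: 'a::zero^4) $ 4 = w"
  unfolding vector_def by simp_all

lemma det_4:
  "det (A::'a::comm_ring_1^4^4) =
   A$1$1*A$2$2*A$3$3*A$4$4 - A$1$1*A$2$2*A$3$4*A$4$3 - A$1$1*A$2$3*A$3$2*A$4$4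
 + A$1$1*A$2$3*A$3$4*A$4$2 + A$1$1*A$2$4*A$3$2*A$4$3 - A$1$1*A$2$4*A$3$3*A$4$2
 - A$1$2*A$2$1*A$3$3*A$4$4 + A$1$2*A$2$1*A$3$4*A$4$3 + A$1$2*A$2$3*A$3$1*A$4$4
 - A$1$2*A$2$3*A$3$4*A$4$1 - A$1$2*A$2$4*A$3$1*A$4$3 + A$1$2*A$2$4*A$3$3*A$4$1
 + A$1$3*A$2$1*A$3$2*A$4$4 - A$1$3*A$2$1*A$3$4*A$4$2 - A$1$3*A$2$2*A$3$1*A$4$4
 + A$1$3*A$2$2*A$3$4*A$4$1 + A$1$3*A$2$4*A$3$1*A$4$2 - A$1$3*A$2$4*A$3$2*A$4$1
 - A$1$4*A$2$1*A$3$2*A$4$3 + A$1$4*A$2$1*A$3$3*A$4$2 + A$1$4*A$2$2*A$3$1*A$4$3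
 - A$1$4*A$2$2*A$3$3*A$4$1 - A$1$4*A$2$3*A$3$1*A$4$2 + A$1$4*A$2$3*A$3$2*A$4$1"
proof -
  have f1: "finite {2::4, 3, 4}" "1 \<notin> {2::4, 3, 4}" by auto
  have f2: "finite {3::4, 4}" "2 \<notin> {3::4, 4}" by auto
  have f3: "finite {4::4}" "3 \<notin> {4::4}" by auto
  show ?thesis
    unfolding det_def UNIV_4
    unfolding sum_over_permutations_insert[OF f1]
    unfolding sum_over_permutations_insert[OF f2]
    unfolding sum_over_permutations_insert[OF f3]
    unfolding permutes_sing
    by (simp add: sign_swap_id permutation_swap_id permutation_compose sign_compose sign_id swap_id_eq algebra_simps)
qed

lemma minkowski_det: "det minkowski = -1"
  by (simp add: det_4 minkowski_def)

definition levi_dual :: "real^4^4 \<Rightarrow> real^4^4" where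
  "levi_dual X = (\<chi> a c. \<Sum>p\<in>UNIV. \<Sum>q\<in>UNIV. levi a c p q * X$p$q)"

lemma det_vector_4_eq_levi_sum:
  "det (vector [u1, u2, u3, u4] :: real^4^4) =
     (\<Sum>i\<in>UNIV. \<Sum>j\<in>UNIV. \<Sum>k\<in>UNIV. \<Sum>l\<in>UNIV. u1$i * u2$j * u3$k * u4$l * levi i j k l)"
  by (simp add: det_4 sum_4 levi_def axis_def algebra_simps)

lemma levi_mult_det:
  fixes M :: "real^4^4"
  shows "(\<Sum>i\<in>UNIV. \<Sum>j\<in>UNIV. \<Sum>k\<in>UNIV. \<Sum>l\<in>UNIV. M$a$i * M$b$j * M$c$k * M$d$l * levi i j k l)
     = levi a b c d * det M"
proof -
  have "(vector [axis a 1, axis b 1, axis c 1, axis d 1] :: real^4^4) ** M = vector [M$a, M$b, M$c, M$d]"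
    unfolding vec_eq_iff forall_4 by (simp add: matrix_matrix_mult_def axis_def mult_if_delta)
  then have "det (vector [M$a, M$b, M$c, M$d] :: real^4^4) = levi a b c d * det M"
    by (metis det_mul levi_def)
  then show ?thesis by (simp add: det_vector_4_eq_levi_sum)
qed

lemma levi_dual_nth:
  "levi_dual X $ 1 $ 1 = 0"
  "levi_dual X $ 1 $ 2 = X$3$4 - X$4$3"
  "levi_dual X $ 1 $ 3 = X$4$2 - X$2$4"
  "levi_dual X $ 1 $ 4 = X$2$3 - X$3$2"
  "levi_dual X $ 2 $ 1 = X$4$3 - X$3$4"
  "levi_dual X $ 2 $ 2 = 0"
  "levi_dual X $ 2 $ 3 = X$1$4 - X$4$1"
  "levi_dual X $ 2 $ 4 = X$3$1 - X$1$3"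
  "levi_dual X $ 3 $ 1 = X$2$4 - X$4$2"
  "levi_dual X $ 3 $ 2 = X$4$1 - X$1$4"
  "levi_dual X $ 3 $ 3 = 0"
  "levi_dual X $ 3 $ 4 = X$1$2 - X$2$1"
  "levi_dual X $ 4 $ 1 = X$3$2 - X$2$3"
  "levi_dual X $ 4 $ 2 = X$1$3 - X$3$1"
  "levi_dual X $ 4 $ 3 = X$2$1 - X$1$2"
  "levi_dual X $ 4 $ 4 = 0"
  by (simp_all add: levi_dual_def sum_4 levi_def det_4 axis_def)

lemma levi_dual_mult_transpose_nth:
  fixes X Y :: "real^4^4"
  shows "(\<Sum>c\<in>UNIV. levi_dual X $ a $ c * levi_dual Y $ b $ c) =
     (if a = b then (\<Sum>p\<in>UNIV. \<Sum>q\<in>UNIV. X$p$q * (Y$p$q - Y$q$p)) else 0)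
     - (\<Sum>q\<in>UNIV. (X$b$q - X$q$b) * Y$a$q) + (\<Sum>p\<in>UNIV. (X$b$p - X$p$b) * Y$p$a)"
  using exhaust_4[of a] exhaust_4[of b] by (auto simp: sum_4 levi_dual_nth algebra_simps)

lemma levi_dual_mult_transpose:
  fixes X Y :: "real^4^4"
  assumes X: "transpose X = - X" and Y: "transpose Y = - Y"
  shows "levi_dual X ** transpose (levi_dual Y) = (2 * (X \<bullet> Y)) *\<^sub>R mat 1 - 4 *\<^sub>R (Y ** transpose X)"
proof -
  have "(levi_dual X ** transpose (levi_dual Y)) $ a $ b =
      (if a = b then 2 * (X \<bullet> Y) else 0) - 4 * (\<Sum>q\<in>UNIV. Y$a$q * X$b$q)" for a b
  proof -
    have "(\<Sum>p\<in>UNIV. \<Sum>q\<in>UNIV. X$p$q * (Y$p$q - Y$q$p)) = (\<Sum>p\<in>UNIV. \<Sum>q\<in>UNIV. 2 * (X$p$q * Y$p$q))"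
    proof (intro sum.cong refl)
      fix p q show "X$p$q * (Y$p$q - Y$q$p) = 2 * (X$p$q * Y$p$q)"
        using antisymmetric_matrix_nth[OF Y, of q p] by simp
    qed
    moreover have "(\<Sum>q\<in>UNIV. (X$b$q - X$q$b) * Y$a$q) = (\<Sum>q\<in>UNIV. 2 * (Y$a$q * X$b$q))"
    proof (intro sum.cong refl)
      fix q show "(X$b$q - X$q$b) * Y$a$q = 2 * (Y$a$q * X$b$q)"
        using antisymmetric_matrix_nth[OF X, of q b] by simp
    qed
    moreover have "(\<Sum>p\<in>UNIV. (X$b$p - X$p$b) * Y$p$a) = (\<Sum>q\<in>UNIV. - 2 * (Y$a$q * X$b$q))"
    proof (intro sum.cong refl)
      fix q show "(X$b$q - X$q$b) * Y$q$a = - 2 * (Y$a$q * X$b$q)"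
        using antisymmetric_matrix_nth[OF X, of q b] antisymmetric_matrix_nth[OF Y, of a q] by simp
    qed
    ultimately show ?thesis
      by (simp add: matrix_matrix_mult_def transpose_def levi_dual_mult_transpose_nth inner_matrix_eq_sum
          sum_negf flip: sum_distrib_left)
  qed
  then show ?thesis
    by (simp add: vec_eq_iff matrix_matrix_mult_def transpose_def mat_def)
qed

lemma levi_dual_congruence_nth:
  fixes M Z :: "real^4^4"
  shows "levi_dual (transpose M ** Z ** M) $ b $ d =
    (\<Sum>f\<in>UNIV. \<Sum>e\<in>UNIV. Z$e$f * (\<Sum>p\<in>UNIV. \<Sum>q\<in>UNIV. M$e$p * M$f$q * levi b d p q))"
proof -
  have "levi_dual (transpose M ** Z ** M) $ b $ d
      = (\<Sum>p\<in>UNIV. \<Sum>q\<in>UNIV. \<Sum>f\<in>UNIV. \<Sum>e\<in>UNIV. Z$e$f * (M$e$p * M$f$q * levi b d p q))"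
    by (simp add: levi_dual_def matrix_matrix_mult_def transpose_def sum_distrib_left sum_distrib_right)
      (simp add: mult_ac)
  also have "\<dots> = (\<Sum>f\<in>UNIV. \<Sum>e\<in>UNIV. \<Sum>p\<in>UNIV. \<Sum>q\<in>UNIV. Z$e$f * (M$e$p * M$f$q * levi b d p q))"
    by (rule sum_swap_pairs)
  finally show ?thesis by (simp add: sum_distrib_left)
qed

lemma levi_dual_congruence:
  fixes M Z :: "real^4^4"
  shows "M ** levi_dual (transpose M ** Z ** M) ** transpose M = det M *\<^sub>R levi_dual Z"
proof -
  define K where "K = levi_dual (transpose M ** Z ** M)"
  define L where "L b d e f = (\<Sum>p\<in>UNIV. \<Sum>q\<in>UNIV. M$e$p * M$f$q * levi b d p q)" for b d e f
  have K_nth: "K $ b $ d = (\<Sum>f\<in>UNIV. \<Sum>e\<in>UNIV. Z$e$f * L b d e f)" for b d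
    unfolding K_def L_def by (rule levi_dual_congruence_nth)
  have "(M ** K ** transpose M) $ a $ c = det M * levi_dual Z $ a $ c" for a c
  proof -
    have "(M ** K ** transpose M) $ a $ c
        = (\<Sum>d\<in>UNIV. \<Sum>b\<in>UNIV. \<Sum>f\<in>UNIV. \<Sum>e\<in>UNIV. Z$e$f * (M$a$b * M$c$d * L b d e f))"
      by (simp add: matrix_matrix_mult_def transpose_def K_nth sum_distrib_left sum_distrib_right)
        (simp add: mult_ac)
    also have "\<dots> = (\<Sum>f\<in>UNIV. \<Sum>e\<in>UNIV. \<Sum>d\<in>UNIV. \<Sum>b\<in>UNIV. Z$e$f * (M$a$b * M$c$d * L b d e f))"
      by (rule sum_swap_pairs)
    also have "\<dots> = (\<Sum>f\<in>UNIV. \<Sum>e\<in>UNIV. Z$e$f * (levi a c e f * det M))"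
    proof (intro sum.cong refl)
      fix e f
      have "(\<Sum>d\<in>UNIV. \<Sum>b\<in>UNIV. M$a$b * M$c$d * L b d e f) =
          (\<Sum>b\<in>UNIV. \<Sum>d\<in>UNIV. \<Sum>p\<in>UNIV. \<Sum>q\<in>UNIV. M$a$b * M$c$d * M$e$p * M$f$q * levi b d p q)"
        by (subst sum.swap) (simp add: L_def sum_distrib_left mult.assoc)
      also have "\<dots> = levi a c e f * det M" by (rule levi_mult_det)
      finally show "(\<Sum>d\<in>UNIV. \<Sum>b\<in>UNIV. Z$e$f * (M$a$b * M$c$d * L b d e f)) = Z$e$f * (levi a c e f * det M)"
        by (simp flip: sum_distrib_left)
    qed
    also have "\<dots> = det M * levi_dual Z $ a $ c"
      by (subst sum.swap) (simp add: levi_dual_def sum_distrib_left mult_ac)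
    finally show ?thesis .
  qed
  then show ?thesis by (simp add: vec_eq_iff K_def)
qed

lemma levi_dual_inverse_congruence:
  fixes gm Y :: "real^4^4"
  assumes "invertible gm" and "transpose gm = gm"
  shows "levi_dual (matrix_inv gm ** Y ** matrix_inv gm) = det (matrix_inv gm) *\<^sub>R (gm ** levi_dual Y ** gm)"
proof -
  define gi where "gi = matrix_inv gm"
  have gi_sym: "transpose gi = gi"
    unfolding gi_def by (rule transpose_matrix_inv_symmetric[OF assms])
  have "levi_dual (gi ** Y ** gi) = gm ** (gi ** levi_dual (gi ** Y ** gi) ** gi) ** gm"
    using assms(1) by (simp add: matrix_mul_assoc gi_def matrix_inv_right)
      (simp add: matrix_inv_left flip: matrix_mul_assoc)
  also have "\<dots> = det gi *\<^sub>R (gm ** levi_dual Y ** gm)"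
    using levi_dual_congruence[of gi Y] by (simp add: gi_sym matrix_scalar_ac flip: scalar_matrix_assoc)
  finally show ?thesis unfolding gi_def .
qed

lemma hodge_eq_levi_dual:
  "hodge gm s Z = (s * sqrt \<bar>det gm\<bar> / 2) *\<^sub>R levi_dual (matrix_inv gm ** Z ** transpose (matrix_inv gm))"
  by (simp add: hodge_def levi_dual_def Let_def vec_eq_iff matrix_sandwich_nth)

lemma linear_hodge: "linear (hodge gm s)"
  by (rule linearI) (simp_all add: hodge_def Let_def vec_eq_iff sum.distrib sum_distrib_left ring_distribs mult_ac)

lemma hodge_mult_transpose:
  fixes gm X Y :: "real^4^4"
  assumes gm: "transpose gm = gm" "det gm < 0" and s: "s = 1 \<or> s = -1"
    and X: "transpose X = - X" and Y: "transpose Y = - Y"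
  shows "hodge gm s X ** matrix_inv gm ** transpose (hodge gm s Y) =
    Y ** matrix_inv gm ** transpose X - (1/2 * ((matrix_inv gm ** X ** matrix_inv gm) \<bullet> Y)) *\<^sub>R gm"
proof -
  define gi where "gi = matrix_inv gm"
  define k where "k = s * sqrt \<bar>det gm\<bar> / 2"
  have gm_inv: "invertible gm" using gm(2) by (simp add: invertible_det_nz)
  then have gi_sym: "transpose gi = gi" and gm_gi: "gm ** gi = mat 1" and gi_gm: "gi ** gm = mat 1"
    using gm(1) unfolding gi_def by (simp_all add: transpose_matrix_inv_symmetric matrix_inv_right matrix_inv_left)
  have cancel: "A ** gm ** gi = A" "A ** gi ** gm = A" for A :: "real^4^4"
    by (simp_all add: gm_gi gi_gm flip: matrix_mul_assoc)
  have hodge_eq: "hodge gm s Z = k *\<^sub>R levi_dual (gi ** Z ** gi)" for Z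
    by (simp add: hodge_eq_levi_dual k_def gi_def[symmetric] gi_sym)
  have X': "transpose (gi ** X ** gi) = - (gi ** X ** gi)"
    by (simp add: matrix_transpose_mul gi_sym X matrix_mul_assoc)
  (* the sign comes from the Lorentzian signature, det g < 0 *)
  have k2: "k * k * det gi = - 1/4"
  proof -
    have "sqrt \<bar>det gm\<bar> * sqrt \<bar>det gm\<bar> = - det gm" using gm(2) by simp
    then have "k * k * det gi = - (det gm * det gi) / 4" using s by (auto simp: k_def)
    also have "det gm * det gi = 1" using gm_gi by (metis det_I det_mul)
    finally show ?thesis by simp
  qed
  have "hodge gm s X ** gi ** transpose (hodge gm s Y) =
      (k * k * det gi) *\<^sub>R (levi_dual (gi ** X ** gi) ** transpose (levi_dual Y) ** gm)"
    by (simp add: hodge_eq levi_dual_inverse_congruence[OF gm_inv gm(1), folded gi_def] transpose_scalar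
        matrix_transpose_mul gm(1) matrix_scalar_ac matrix_mul_assoc cancel flip: scalar_matrix_assoc)
  also have "\<dots> = Y ** gi ** transpose X - (1/2 * ((gi ** X ** gi) \<bullet> Y)) *\<^sub>R gm"
    by (simp add: k2 levi_dual_mult_transpose[OF X' Y] matrix_diff_rdistrib matrix_scalar_ac
        matrix_transpose_mul gi_sym matrix_mul_assoc cancel scaleR_diff_right flip: scalar_matrix_assoc)
  finally show ?thesis unfolding gi_def .
qed

section \<open>Twisted self-duality and the gauge part of the energy-momentum tensor\<close>

definition lin_comb :: "real^'m^'k \<Rightarrow> ('m::finite \<Rightarrow> 'a::real_vector) \<Rightarrow> 'k \<Rightarrow> 'a" where
  "lin_comb T W k = (\<Sum>m\<in>UNIV. T$k$m *\<^sub>R W m)"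

lemma lin_comb_lin_comb: "lin_comb S (lin_comb T W) = lin_comb (S ** T) W"
proof
  fix k
  have "lin_comb S (lin_comb T W) k = (\<Sum>m\<in>UNIV. \<Sum>n\<in>UNIV. (S$k$m * T$m$n) *\<^sub>R W n)"
    by (simp add: lin_comb_def scaleR_sum_right)
  also have "\<dots> = (\<Sum>n\<in>UNIV. \<Sum>m\<in>UNIV. (S$k$m * T$m$n) *\<^sub>R W n)"
    by (rule sum.swap)
  finally show "lin_comb S (lin_comb T W) k = lin_comb (S ** T) W k"
    by (simp add: lin_comb_def matrix_matrix_mult_def scaleR_sum_left)
qed

lemma lin_comb_mat_1 [simp]: "lin_comb (mat 1) W = W"
  by (simp add: lin_comb_def fun_eq_iff mat_def if_distrib[of "\<lambda>c. c *\<^sub>R _"] cong: if_cong)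

lemma lin_comb_uminus: "lin_comb T (- W) = - lin_comb T W"
  by (simp add: lin_comb_def fun_eq_iff sum_negf)

lemma lin_comb_diff: "lin_comb T (X - Y) = lin_comb T X - lin_comb T Y"
  by (simp add: lin_comb_def fun_eq_iff sum_subtractf scaleR_diff_right)

lemma lin_comb_uminus_left: "lin_comb (- T) W = - lin_comb T W"
  by (simp add: lin_comb_def fun_eq_iff sum_negf)

lemma lin_comb_zero_left [simp]: "lin_comb 0 W k = 0"
  by (simp add: lin_comb_def)

lemma lin_comb_block_mat:
  "lin_comb (block_mat A B C D) W (Inl a) = lin_comb A (W \<circ> Inl) a + lin_comb B (W \<circ> Inr) a"
  "lin_comb (block_mat A B C D) W (Inr a) = lin_comb C (W \<circ> Inl) a + lin_comb D (W \<circ> Inr) a"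
  by (simp_all add: lin_comb_def sum_UNIV_sum_type)

lemma transpose_lin_comb: "transpose (lin_comb T W k) = lin_comb T (transpose \<circ> W) k"
  by (simp add: lin_comb_def vec_eq_iff transpose_def)

lemma linear_lin_comb:
  assumes "linear h"
  shows "h \<circ> lin_comb T W = lin_comb T (h \<circ> W)"
  by (simp add: fun_eq_iff lin_comb_def linear_sum[OF assms] linear_scale[OF assms])

lemma twisted_self_dual_lin_comb:
  assumes A: "invertible A" and dual: "hodge gm s \<circ> W = - lin_comb J W"
  shows "hodge gm s \<circ> lin_comb A W = - lin_comb (A ** J ** matrix_inv A) (lin_comb A W)"
proof -
  have "hodge gm s \<circ> lin_comb A W = - lin_comb (A ** J) W"
    by (simp add: linear_lin_comb[OF linear_hodge] dual lin_comb_uminus lin_comb_lin_comb)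
  also have "A ** J = A ** J ** matrix_inv A ** A"
    by (simp add: matrix_inv_left[OF A] flip: matrix_mul_assoc)
  finally show ?thesis by (simp only: lin_comb_lin_comb)
qed

(* With J = gamma(R, I) the upper half of star W = - J W reads star F = I^-1 R F - I^-1 G,
   i.e. G = R F - I star F for W = (F, G). *)
lemma twisted_self_dual_decomp:
  fixes W :: "'v::finite + 'v \<Rightarrow> real^4^4"
  assumes I: "invertible I" and J: "gamma_mat R I = J" and dual: "hodge gm s \<circ> W = - lin_comb J W"
  shows "W = lin_comb (block_mat (mat 1) 0 R (- I)) (case_sum (W \<circ> Inl) (hodge gm s \<circ> (W \<circ> Inl)))"
proof -
  define F where "F = W \<circ> Inl"
  define G where "G = W \<circ> Inr"
  define H where "H = hodge gm s \<circ> F"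
  have "H = lin_comb (matrix_inv I ** R) F - lin_comb (matrix_inv I) G"
  proof
    fix L
    have "H L = - lin_comb J W (Inl L)" using fun_cong[OF dual, of "Inl L"] by (simp add: H_def F_def)
    then show "H L = (lin_comb (matrix_inv I ** R) F - lin_comb (matrix_inv I) G) L"
      by (simp add: J[symmetric] gamma_mat_block_mat lin_comb_block_mat lin_comb_uminus_left F_def G_def)
  qed
  then have "lin_comb I H = lin_comb R F - G"
    by (simp add: lin_comb_diff lin_comb_lin_comb matrix_mul_assoc matrix_inv_right[OF I])
  then have G: "G = lin_comb R F - lin_comb I H" by (simp add: fun_eq_iff)
  show ?thesis
  proof
    fix k show "W k = lin_comb (block_mat (mat 1) 0 R (- I)) (case_sum (W \<circ> Inl) (hodge gm s \<circ> (W \<circ> Inl))) k"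
      using fun_cong[OF G] by (cases k) (simp_all add: lin_comb_block_mat lin_comb_uminus_left case_sum_o_inj F_def G_def H_def)
  qed
qed

definition field_contraction :: "real^'k^'k \<Rightarrow> real^'n^'n \<Rightarrow> ('k::finite \<Rightarrow> real^'n^'n) \<Rightarrow> real^'n^'n" where
  "field_contraction Q gi W = (\<Sum>k\<in>UNIV. \<Sum>l\<in>UNIV. Q$k$l *\<^sub>R (W k ** gi ** transpose (W l)))"

lemma lin_comb_mult_transpose:
  fixes X Y :: "'k::finite \<Rightarrow> real^'n::finite^'n"
  shows "lin_comb S X k ** gi ** transpose (lin_comb T Y l) =
    (\<Sum>m\<in>UNIV. \<Sum>n\<in>UNIV. (S$k$m * T$l$n) *\<^sub>R (X m ** gi ** transpose (Y n)))"
    (is "?lhs = ?rhs")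
proof -
  have "?lhs $ a $ b = ?rhs $ a $ b" for a b
  proof -
    have "?lhs $ a $ b =
        (\<Sum>e\<in>UNIV. \<Sum>f\<in>UNIV. \<Sum>n\<in>UNIV. \<Sum>m\<in>UNIV. S$k$m * T$l$n * (X m$a$e * Y n$b$f * gi$e$f))"
      by (simp add: matrix_sandwich_nth lin_comb_def sum_distrib_left sum_distrib_right mult_ac)
    also have "\<dots> = (\<Sum>e\<in>UNIV. \<Sum>f\<in>UNIV. \<Sum>m\<in>UNIV. \<Sum>n\<in>UNIV. S$k$m * T$l$n * (X m$a$e * Y n$b$f * gi$e$f))"
      by (rule sum.cong[OF refl], rule sum.cong[OF refl], rule sum.swap)
    also have "\<dots> = (\<Sum>m\<in>UNIV. \<Sum>n\<in>UNIV. \<Sum>e\<in>UNIV. \<Sum>f\<in>UNIV. S$k$m * T$l$n * (X m$a$e * Y n$b$f * gi$e$f))"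
      by (rule sum_swap_pairs)
    also have "\<dots> = ?rhs $ a $ b"
      by (simp add: matrix_sandwich_nth sum_distrib_left)
    finally show ?thesis .
  qed
  then show ?thesis by (simp add: vec_eq_iff)
qed

lemma field_contraction_lin_comb:
  "field_contraction Q gi (lin_comb T W) = field_contraction (transpose T ** Q ** T) gi W"
proof -
  have "field_contraction Q gi (lin_comb T W) =
      (\<Sum>k\<in>UNIV. \<Sum>l\<in>UNIV. \<Sum>m\<in>UNIV. \<Sum>n\<in>UNIV. (T$k$m * Q$k$l * T$l$n) *\<^sub>R (W m ** gi ** transpose (W n)))"
    by (simp add: field_contraction_def lin_comb_mult_transpose scaleR_sum_right mult_ac)
  also have "\<dots> = (\<Sum>m\<in>UNIV. \<Sum>n\<in>UNIV. \<Sum>k\<in>UNIV. \<Sum>l\<in>UNIV. (T$k$m * Q$k$l * T$l$n) *\<^sub>R (W m ** gi ** transpose (W n)))"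
    by (rule sum_swap_pairs)
  also have "\<dots> = field_contraction (transpose T ** Q ** T) gi W"
  proof -
    have "(transpose T ** Q ** T) $ m $ n = (\<Sum>k\<in>UNIV. \<Sum>l\<in>UNIV. T$k$m * Q$k$l * T$l$n)" for m n
      using matrix_sandwich_nth[of "transpose T" Q "transpose T" m n] by (simp add: transpose_def mult_ac)
    then show ?thesis by (simp add: field_contraction_def scaleR_sum_left)
  qed
  finally show ?thesis .
qed

lemma field_contraction_block_diag:
  "field_contraction (block_mat P 0 0 Q) gi W = field_contraction P gi (W \<circ> Inl) + field_contraction Q gi (W \<circ> Inr)"
  by (simp add: field_contraction_def sum_UNIV_sum_type)

lemma field_contraction_Sp_invariant:
  assumes "A \<in> Sp"
  shows "field_contraction (symp_mat ** (A ** J ** matrix_inv A)) gi (lin_comb A W) =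
    field_contraction (symp_mat ** J) gi W"
proof -
  have A: "invertible A" "transpose A ** symp_mat ** A = symp_mat"
    using assms symp_form_preserved_iff unfolding Sp_def by blast+
  have "transpose A ** (symp_mat ** (A ** J ** matrix_inv A)) ** A = (transpose A ** symp_mat ** A) ** J"
    by (simp add: matrix_mul_assoc) (simp add: matrix_inv_left[OF A(1)] flip: matrix_mul_assoc)
  then show ?thesis by (simp add: field_contraction_lin_comb A(2))
qed

lemma field_contraction_hodge:
  fixes gm :: "real^4^4" and F :: "'v::finite \<Rightarrow> real^4^4"
  assumes gm: "transpose gm = gm" "det gm < 0" and s: "s = 1 \<or> s = -1"
    and F: "\<And>L. transpose (F L) = - F L"
  shows "field_contraction I (matrix_inv gm) (hodge gm s \<circ> F) =
    field_contraction (transpose I) (matrix_inv gm) F -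
    (1/2 * (\<Sum>L\<in>UNIV. \<Sum>S\<in>UNIV. I$L$S * ((matrix_inv gm ** F L ** matrix_inv gm) \<bullet> F S))) *\<^sub>R gm"
proof -
  have "field_contraction I (matrix_inv gm) (hodge gm s \<circ> F) =
      (\<Sum>L\<in>UNIV. \<Sum>S\<in>UNIV. I$L$S *\<^sub>R (F S ** matrix_inv gm ** transpose (F L))) -
      (\<Sum>L\<in>UNIV. \<Sum>S\<in>UNIV. (I$L$S * (1/2 * ((matrix_inv gm ** F L ** matrix_inv gm) \<bullet> F S))) *\<^sub>R gm)"
    by (simp add: field_contraction_def hodge_mult_transpose[OF gm s F F] scaleR_diff_right sum_subtractf)
  also have "(\<Sum>L\<in>UNIV. \<Sum>S\<in>UNIV. I$L$S *\<^sub>R (F S ** matrix_inv gm ** transpose (F L))) =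
      field_contraction (transpose I) (matrix_inv gm) F"
    unfolding field_contraction_def by (subst sum.swap) (simp add: transpose_def)
  finally show ?thesis by (simp add: scaleR_sum_left sum_distrib_left mult_ac comp_def)
qed

definition maxwell_tensor :: "real^'v^'v \<Rightarrow> real^'n^'n \<Rightarrow> ('v::finite \<Rightarrow> real^'n^'n) \<Rightarrow> real^'n^'n" where
  "maxwell_tensor I gm F =
     2 *\<^sub>R field_contraction I (matrix_inv gm) F -
     (1/2 * (\<Sum>L\<in>UNIV. \<Sum>S\<in>UNIV. I$L$S * ((transpose (matrix_inv gm) ** F L ** matrix_inv gm) \<bullet> F S))) *\<^sub>R gm"

lemma maxwell_tensor_gamma_mat:
  fixes gm :: "real^4^4" and W :: "'v::finite + 'v \<Rightarrow> real^4^4"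
  assumes gm: "transpose gm = gm" "det gm < 0" and s: "s = 1 \<or> s = -1"
    and R: "transpose R = R" and I: "transpose I = I" "pos_def_mat I" and J: "gamma_mat R I = J"
    and W: "\<And>k. transpose (W k) = - W k" and dual: "hodge gm s \<circ> W = - lin_comb J W"
  shows "maxwell_tensor I gm (W \<circ> Inl) = field_contraction (symp_mat ** J) (matrix_inv gm) W"
proof -
  define P where "P = block_mat (mat 1) 0 R (- I)"
  have I_inv: "invertible I" using I(2) by (rule pos_def_mat_invertible)
  have gi_sym: "transpose (matrix_inv gm) = matrix_inv gm"
    using gm by (simp add: transpose_matrix_inv_symmetric invertible_det_nz)
  have "transpose P ** (symp_mat ** J) ** P = block_mat I 0 0 I"
    unfolding P_def J[symmetric] gamma_mat_block_mat symp_mat_block_mat transpose_block_mat block_mat_mult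
    by (simp add: R I(1) matrix_add_ldistrib matrix_add_rdistrib matrix_diff_rdistrib matrix_mul_assoc
        matrix_inv_right[OF I_inv] matrix_inv_left[OF I_inv])
  then have "field_contraction (symp_mat ** J) (matrix_inv gm) W =
      field_contraction I (matrix_inv gm) (W \<circ> Inl) +
      field_contraction I (matrix_inv gm) (hodge gm s \<circ> (W \<circ> Inl))"
    by (subst twisted_self_dual_decomp[OF I_inv J dual])
      (simp add: field_contraction_lin_comb P_def field_contraction_block_diag case_sum_o_inj)
  then show ?thesis
    by (simp add: maxwell_tensor_def field_contraction_hodge[OF gm s] W I(1) gi_sym scaleR_2)
qed

lemma maxwell_tensor_tame_cs:
  fixes gm :: "real^4^4" and W :: "'v::finite + 'v \<Rightarrow> real^4^4"
  assumes gm: "transpose gm = gm" "det gm < 0" and s: "s = 1 \<or> s = -1" and J: "tame_cs J"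
    and W: "\<And>k. transpose (W k) = - W k" and dual: "hodge gm s \<circ> W = - lin_comb J W"
  shows "maxwell_tensor (snd (gamma_inv J)) gm (W \<circ> Inl) = field_contraction (symp_mat ** J) (matrix_inv gm) W"
  using maxwell_tensor_gamma_mat[OF gm s gamma_inv[OF J] W] dual gamma_inv(4)[OF J] by simp

section \<open>The energy-momentum tensor\<close>

definition pullback_metric :: "(real^'s \<Rightarrow> real^'s^'s) \<Rightarrow> (real^'n \<Rightarrow> real^'s) \<Rightarrow> real^'n \<Rightarrow> real^'n^'n" where
  "pullback_metric G \<phi> x = (let D = frechet_derivative \<phi> (at x) in
     \<chi> a b. D (axis a 1) \<bullet> (G (\<phi> x) *v D (axis b 1)))"

lemma energy_momentum_decompose:
  "energy_momentum G J g \<phi> \<V> x =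
    pullback_metric G \<phi> x - (1/2 * (matrix_inv (g x) \<bullet> pullback_metric G \<phi> x)) *\<^sub>R g x +
    maxwell_tensor (snd (gamma_inv (J (\<phi> x)))) (g x) (($) (\<V> x) \<circ> Inl)"
proof -
  define gi where "gi = matrix_inv (g x)"
  define D where "D a = frechet_derivative \<phi> (at x) (axis a 1)" for a
  define F where "F L = \<V> x $ Inl L" for L
  define I where "I = snd (gamma_inv (J (\<phi> x)))"
  define P where "P = pullback_metric G \<phi> x"
  have P_nth: "P $ a $ b = (\<Sum>i\<in>UNIV. \<Sum>j\<in>UNIV. G (\<phi> x) $i$j * D a $ i * D b $ j)" for a b
    by (simp add: P_def pullback_metric_def Let_def D_def inner_matrix_vector_eq_sum)
  have kinetic: "(\<Sum>i\<in>UNIV. \<Sum>j\<in>UNIV. G (\<phi> x) $i$j *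
      (\<Sum>c\<in>UNIV. \<Sum>d\<in>UNIV. gi$c$d * D c $ i * D d $ j)) = gi \<bullet> P"
  proof -
    have "(\<Sum>i\<in>UNIV. \<Sum>j\<in>UNIV. G (\<phi> x) $i$j * (\<Sum>c\<in>UNIV. \<Sum>d\<in>UNIV. gi$c$d * D c $ i * D d $ j)) =
        (\<Sum>i\<in>UNIV. \<Sum>j\<in>UNIV. \<Sum>c\<in>UNIV. \<Sum>d\<in>UNIV. gi$c$d * (G (\<phi> x) $i$j * D c $ i * D d $ j))"
      by (simp add: sum_distrib_left mult_ac)
    also have "\<dots> = (\<Sum>c\<in>UNIV. \<Sum>d\<in>UNIV. \<Sum>i\<in>UNIV. \<Sum>j\<in>UNIV. gi$c$d * (G (\<phi> x) $i$j * D c $ i * D d $ j))"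
      by (rule sum_swap_pairs)
    also have "\<dots> = gi \<bullet> P"
      by (simp add: inner_matrix_eq_sum P_nth sum_distrib_left)
    finally show ?thesis .
  qed
  have gauge_trace: "(\<Sum>c\<in>UNIV. \<Sum>d\<in>UNIV. \<Sum>e\<in>UNIV. \<Sum>f\<in>UNIV.
      gi$c$e * gi$d$f * \<V> x $ Inl L $c$d * \<V> x $ Inl S $e$f) =
      (transpose gi ** F L ** gi) \<bullet> F S" for L S
    by (simp add: inner_sandwich_eq_sum F_def)
  have gauge: "(\<Sum>L\<in>UNIV. \<Sum>S\<in>UNIV. I$L$S *
      (\<Sum>c\<in>UNIV. \<Sum>d\<in>UNIV. \<V> x $ Inl L $a$c * gi$c$d * \<V> x $ Inl S $b$d)) =
      field_contraction I gi F $ a $ b" for a b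
    by (simp add: field_contraction_def matrix_sandwich_nth F_def mult_ac)
  have "($) (\<V> x) \<circ> Inl = F" by (simp add: fun_eq_iff F_def)
  then show ?thesis
    by (simp add: energy_momentum_def Let_def vec_eq_iff maxwell_tensor_def P_nth kinetic gauge_trace gauge
        flip: gi_def D_def I_def P_def) (simp add: mult_ac)
qed

lemma energy_momentum_eq_field_contraction:
  assumes gm: "transpose (g x) = g x" "det (g x) < 0" and s: "s = 1 \<or> s = -1"
    and J: "tame_cs (J (\<phi> x))" and \<V>: "\<And>k. transpose (\<V> x $ k) = - \<V> x $ k"
    and dual: "hodge (g x) s \<circ> ($) (\<V> x) = - lin_comb (J (\<phi> x)) (($) (\<V> x))"
  shows "energy_momentum G J g \<phi> \<V> x =
    pullback_metric G \<phi> x - (1/2 * (matrix_inv (g x) \<bullet> pullback_metric G \<phi> x)) *\<^sub>R g x +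
    field_contraction (symp_mat ** J (\<phi> x)) (matrix_inv (g x)) (($) (\<V> x))"
  unfolding energy_momentum_decompose maxwell_tensor_tame_cs[OF gm s J \<V> dual] ..

lemma energy_momentum_Sp_invariant:
  assumes gm: "transpose (g x) = g x" "det (g x) < 0" and s: "s = 1 \<or> s = -1"
    and J: "tame_cs (J (\<phi> x))" and \<V>: "\<And>k. transpose (\<V> x $ k) = - \<V> x $ k"
    and dual: "hodge (g x) s \<circ> ($) (\<V> x) = - lin_comb (J (\<phi> x)) (($) (\<V> x))"
    and A: "A \<in> Sp" and J': "J' (\<phi>' x) = A ** J (\<phi> x) ** matrix_inv A"
    and \<V>': "($) (\<V>' x) = lin_comb A (($) (\<V> x))"
    and pullback: "pullback_metric G' \<phi>' x = pullback_metric G \<phi> x"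
  shows "energy_momentum G' J' g \<phi>' \<V>' x = energy_momentum G J g \<phi> \<V> x"
proof -
  have A_inv: "invertible A" using A unfolding Sp_def by blast
  have J'_tame: "tame_cs (J' (\<phi>' x))" unfolding J' by (rule tame_cs_conj_Sp[OF A J])
  have \<V>'_anti: "transpose (\<V>' x $ k) = - \<V>' x $ k" for k
  proof -
    have "transpose \<circ> ($) (\<V> x) = - ($) (\<V> x)" by (simp add: fun_eq_iff \<V>)
    then show ?thesis using fun_cong[OF \<V>', of k] by (simp add: transpose_lin_comb lin_comb_uminus)
  qed
  have dual': "hodge (g x) s \<circ> ($) (\<V>' x) = - lin_comb (J' (\<phi>' x)) (($) (\<V>' x))"
    unfolding \<V>' J' by (rule twisted_self_dual_lin_comb[OF A_inv dual])
  have "energy_momentum G' J' g \<phi>' \<V>' x =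
      pullback_metric G' \<phi>' x - (1/2 * (matrix_inv (g x) \<bullet> pullback_metric G' \<phi>' x)) *\<^sub>R g x +
      field_contraction (symp_mat ** J' (\<phi>' x)) (matrix_inv (g x)) (($) (\<V>' x))"
    using gm s J'_tame \<V>'_anti dual' by (rule energy_momentum_eq_field_contraction)
  also have "\<dots> = energy_momentum G J g \<phi> \<V> x"
    using energy_momentum_eq_field_contraction[where g = g and x = x and J = J and \<phi> = \<phi> and \<V> = \<V>, OF gm s J \<V> dual]
    by (simp add: pullback J' \<V>' field_contraction_Sp_invariant[OF A])
  finally show ?thesis .
qed

lemma smooth_on_differentiable_at:
  assumes "smooth_on S f" "open S" "x \<in> S"
  shows "f differentiable at x"
proof -
  have "Ck_on (Suc 0) S f" using assms(1) unfolding smooth_on_def by blast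
  then show ?thesis using assms(2,3) differentiable_on_eq_differentiable_at by auto
qed

lemma orient_diffeo_inverse_derivative:
  assumes V: "open V" and f: "orient_diffeo V oV f" and y: "y \<in> V"
  shows "frechet_derivative (inv_into V f) (at (f y)) (frechet_derivative f (at y) u) = u"
proof -
  define h where "h = inv_into V f"
  have bij: "bij_betw f V V" and f_smooth: "smooth_on V f" and h_smooth: "smooth_on V h"
    using f unfolding orient_diffeo_def h_def by auto
  have hf: "h (f z) = z" if "z \<in> V" for z
    unfolding h_def using bij that by (simp add: bij_betw_imp_inj_on)
  have "(f has_derivative frechet_derivative f (at y)) (at y)"
    using smooth_on_differentiable_at[OF f_smooth V y] by (simp add: frechet_derivative_works)
  moreover have "(h has_derivative frechet_derivative h (at (f y))) (at (f y))"
    using smooth_on_differentiable_at[OF h_smooth V] bij y by (simp add: frechet_derivative_works bij_betwE)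
  ultimately have "((h \<circ> f) has_derivative (frechet_derivative h (at (f y)) \<circ> frechet_derivative f (at y))) (at y)"
    by (rule diff_chain_at)
  moreover have "((h \<circ> f) has_derivative id) (at y)"
    by (rule has_derivative_transform_within_open[OF has_derivative_id V y]) (simp add: hf)
  ultimately show ?thesis
    unfolding h_def[symmetric] by (metis comp_apply has_derivative_unique id_apply)
qed

lemma push_metric_eq_congruence:
  "push_metric V f G y = transpose (matrix (frechet_derivative (inv_into V f) (at y))) ** G (inv_into V f y) **
     matrix (frechet_derivative (inv_into V f) (at y))" (is "_ = transpose ?P ** _ ** ?P")
proof -
  define P where "P = ?P"
  have "(transpose P ** G (inv_into V f y) ** P) $ i $ j = push_metric V f G y $ i $ j" for i j
    using matrix_sandwich_nth[of "transpose P" "G (inv_into V f y)" "transpose P" i j]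
    by (simp add: push_metric_def Let_def P_def matrix_def transpose_def mult_ac)
  then show ?thesis by (simp add: vec_eq_iff P_def)
qed

lemma pullback_push_metric:
  assumes V: "open V" and f: "orient_diffeo V oV f" and U: "open U" "x \<in> U"
    and \<phi>: "smooth_on U \<phi>" "\<phi> ` U \<subseteq> V"
  shows "pullback_metric (push_metric V f G) (f \<circ> \<phi>) x = pullback_metric G \<phi> x"
proof -
  define y where "y = \<phi> x"
  define Df where "Df = frechet_derivative f (at y)"
  define D\<phi> where "D\<phi> = frechet_derivative \<phi> (at x)"
  define P where "P = matrix (frechet_derivative (inv_into V f) (at (f y)))"
  have y: "y \<in> V" using \<phi> U unfolding y_def by blast
  have bij: "bij_betw f V V" using f unfolding orient_diffeo_def by blast
  then have fy: "f y \<in> V" and hf: "inv_into V f (f y) = y"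
    using y by (simp_all add: bij_betwE bij_betw_imp_inj_on)
  have P_Df: "P *v Df u = u" for u
  proof -
    have "(inv_into V f) differentiable at (f y)"
      using f fy V smooth_on_differentiable_at unfolding orient_diffeo_def by blast
    then have "linear (frechet_derivative (inv_into V f) (at (f y)))"
      by (simp add: frechet_derivative_works has_derivative_linear)
    then show ?thesis
      using orient_diffeo_inverse_derivative[OF V f y]
      by (simp add: P_def Df_def matrix_works linear_matrix_vector_mul_eq)
  qed
  have chain: "frechet_derivative (f \<circ> \<phi>) (at x) = Df \<circ> D\<phi>"
    unfolding Df_def D\<phi>_def y_def
    using smooth_on_differentiable_at[OF \<phi>(1) U(1,2)] smooth_on_differentiable_at y V f
    by (intro frechet_derivative_compose) (auto simp: orient_diffeo_def y_def)
  have "push_metric V f G (f y) = transpose P ** G y ** P"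
    by (simp add: push_metric_eq_congruence P_def hf)
  then show ?thesis
    by (simp add: pullback_metric_def Let_def chain inner_congruence P_Df flip: y_def D\<phi>_def)
qed

lemma lorentzian_on_det_neg:
  assumes "lorentzian_on U g" "x \<in> U"
  shows "det (g x) < 0"
proof -
  obtain P where P: "transpose P ** g x ** P = minkowski"
    using assms unfolding lorentzian_on_def by blast
  have "det P * det P * det (g x) = det (transpose P ** g x ** P)" by (simp add: det_mul)
  also have "\<dots> = -1" by (simp add: P minkowski_det)
  finally have "det P * det P * det (g x) = -1" .
  moreover have "det P * det P \<ge> 0" by simp
  ultimately show ?thesis using mult_nonneg_nonneg[of "det P * det P" "det (g x)"] by linarith
qed

lemma Conf_pointwise:
  assumes "(g, \<phi>, \<V>) \<in> Conf U oU V G J" and "orientation_on U oU" and "x \<in> U"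
  shows "transpose (g x) = g x" "det (g x) < 0" "oU x = 1 \<or> oU x = -1" "\<phi> x \<in> V"
    "\<And>k. transpose (\<V> x $ k) = - \<V> x $ k"
    "hodge (g x) (oU x) \<circ> ($) (\<V> x) = - lin_comb (J (\<phi> x)) (($) (\<V> x))"
  using assms lorentzian_on_det_neg
  by (auto simp: Conf_def lorentzian_on_def orientation_on_def fun_eq_iff lin_comb_def)

theorem lemma2p16:
  fixes U :: "(real^4) set" and oU :: "real^4 \<Rightarrow> real"
    and V :: "(real^'s::finite) set" and oV :: "real^'s \<Rightarrow> real"
    and G :: "real^'s \<Rightarrow> real^'s^'s"
    and J :: "real^'s \<Rightarrow> real^('v::finite + 'v)^('v + 'v)"
    and f :: "real^'s \<Rightarrow> real^'s" and A :: "real^('v + 'v)^('v + 'v)"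
    and g :: "real^4 \<Rightarrow> real^4^4" and \<phi> :: "real^4 \<Rightarrow> real^'s"
    and \<V> :: "real^4 \<Rightarrow> real^4^4^('v + 'v)"
  assumes "contractible U" and "open U" and "compact (closure U)" and "U \<noteq> {}"
    and "orientation_on U oU"
    and "open V" and "orientation_on V oV"
    and "riemannian_on V G" and "taming_map V J"
    and "orient_diffeo V oV f" and "A \<in> Sp"
    and "(g, \<phi>, \<V>) \<in> Conf U oU V G J"
  shows "\<forall>x\<in>U. energy_momentum (push_metric V f G) (J_transf V f A J)
                 g (f \<circ> \<phi>) (\<lambda>x. \<chi> k. \<Sum>l\<in>UNIV. A $ k $ l *\<^sub>R \<V> x $ l) x
             = energy_momentum G J g \<phi> \<V> x"
proof
  fix x assume x: "x \<in> U"
  note at_x = Conf_pointwise[OF assms(12,5) x]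
  have "smooth_on U \<phi>" "\<phi> ` U \<subseteq> V" using assms(12) unfolding Conf_def by auto
  then have pullback: "pullback_metric (push_metric V f G) (f \<circ> \<phi>) x = pullback_metric G \<phi> x"
    by (rule pullback_push_metric[OF assms(6,10,2) x])
  have J: "tame_cs (J (\<phi> x))" using assms(9) at_x(4) unfolding taming_map_def by blast
  have J': "J_transf V f A J ((f \<circ> \<phi>) x) = A ** J (\<phi> x) ** matrix_inv A"
    using assms(10) at_x(4) unfolding J_transf_def orient_diffeo_def by (auto simp: bij_betw_imp_inj_on)
  have \<V>': "($) ((\<lambda>x. \<chi> k. \<Sum>l\<in>UNIV. A $ k $ l *\<^sub>R \<V> x $ l) x) = lin_comb A (($) (\<V> x))"
    by (simp add: fun_eq_iff lin_comb_def)
  show "energy_momentum (push_metric V f G) (J_transf V f A J) g (f \<circ> \<phi>)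
      (\<lambda>x. \<chi> k. \<Sum>l\<in>UNIV. A $ k $ l *\<^sub>R \<V> x $ l) x = energy_momentum G J g \<phi> \<V> x"
    using at_x(1-3) J at_x(5,6) assms(11) J' \<V>' pullback by (rule energy_momentum_Sp_invariant)
qed

end
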